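(* Let $\mathcal{C}$ be a binary linear $[n,k,d]$ code with $d>3$, and let $\ell$ be an integer with $3\le\ell\le d$. Then $$\rho_{\ell}(\mathcal{C})\;\le\;\binom{n-k}{1}+\binom{n-k}{2}+\cdots+\binom{n-k}{\ell-2}.$$
   Context: For a binary matrix with columns indexed by $\{0,\ldots,n-1\}$, a row resolves a nonempty column set $I$ if its restriction to $I$ has Hamming weight exactly one; $I$ is a stopping set if no row resolves it; the stopping distance is the minimum size of a stopping set. A (possibly redundant) parity-check matrix of $\mathcal{C}$ is a binary matrix whose row space equals $\mathcal{C}^\perp$; $\rho_\ell(\mathcal{C})$ is the smallest number of rows of such a matrix with stopping distance at least $\ell$. *)

theory Defs
  imports Main "HOL-Library.Extended_Nat"
begin

text \<open>Binary vectors of length n are represented by their supports, i.e. subsets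
of {0..<n}; addition over GF(2) is symmetric difference, and the inner product
of x and y is the parity of card (x \<inter> y).  A binary matrix with n columns is a
list of rows (repetitions allowed), each row a subset of {0..<n}.\<close>

definition vadd :: "nat set \<Rightarrow> nat set \<Rightarrow> nat set" where
  "vadd x y = (x - y) \<union> (y - x)"

definition binary_linear_code :: "nat \<Rightarrow> nat set set \<Rightarrow> bool" where
  "binary_linear_code n C \<longleftrightarrow>
     C \<subseteq> Pow {0..<n} \<and> {} \<in> C \<and> (\<forall>x\<in>C. \<forall>y\<in>C. vadd x y \<in> C)"

text \<open>[n,k,d] code: linear, dimension k (so 2^k codewords), minimum distance d
(minimum Hamming weight of a nonzero codeword).\<close>
definition is_nkd_code :: "nat \<Rightarrow> nat \<Rightarrow> nat \<Rightarrow> nat set set \<Rightarrow> bool" where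
  "is_nkd_code n k d C \<longleftrightarrow>
     binary_linear_code n C \<and> card C = 2 ^ k \<and>
     (\<exists>c\<in>C. c \<noteq> {} \<and> card c = d) \<and> (\<forall>c\<in>C. c \<noteq> {} \<longrightarrow> d \<le> card c)"

definition dual_code :: "nat \<Rightarrow> nat set set \<Rightarrow> nat set set" where
  "dual_code n C = {x. x \<subseteq> {0..<n} \<and> (\<forall>c\<in>C. even (card (x \<inter> c)))}"

definition row_comb :: "nat set list \<Rightarrow> nat set \<Rightarrow> nat set" where
  "row_comb H S = {j. odd (card {i\<in>S. j \<in> H ! i})}"

definition row_space :: "nat set list \<Rightarrow> nat set set" where
  "row_space H = {row_comb H S | S. S \<subseteq> {0..<length H}}"

definition is_binary_matrix :: "nat \<Rightarrow> nat set list \<Rightarrow> bool" where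
  "is_binary_matrix n H \<longleftrightarrow> (\<forall>r\<in>set H. r \<subseteq> {0..<n})"

definition is_parity_check_matrix :: "nat \<Rightarrow> nat set set \<Rightarrow> nat set list \<Rightarrow> bool" where
  "is_parity_check_matrix n C H \<longleftrightarrow>
     is_binary_matrix n H \<and> row_space H = dual_code n C"

definition resolves :: "nat set \<Rightarrow> nat set \<Rightarrow> bool" where
  "resolves r I \<longleftrightarrow> card (r \<inter> I) = 1"

definition stopping_set :: "nat \<Rightarrow> nat set list \<Rightarrow> nat set \<Rightarrow> bool" where
  "stopping_set n H I \<longleftrightarrow>
     I \<subseteq> {0..<n} \<and> I \<noteq> {} \<and> (\<forall>r\<in>set H. \<not> resolves r I)"

text \<open>Stopping distance; \<infinity> if there is no stopping set.\<close>
definition stopping_distance :: "nat \<Rightarrow> nat set list \<Rightarrow> enat" where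
  "stopping_distance n H = (INF I\<in>{I. stopping_set n H I}. enat (card I))"

text \<open>rho_l(C); \<infinity> if no suitable parity-check matrix exists.\<close>
definition rho :: "nat \<Rightarrow> nat \<Rightarrow> nat set set \<Rightarrow> enat" where
  "rho n l C = (INF H\<in>{H. is_parity_check_matrix n C H \<and>
                          enat l \<le> stopping_distance n H}. enat (length H))"

end

theory Submission
  imports Defs
begin

text \<open>
  Let hs be a basis of the dual code; it has r = n - k rows.  Take as parity-check
  matrix H the list of all sums of between 1 and l - 2 rows of hs; it has
  binom(r,1) + ... + binom(r,l-2) rows and row space equal to the dual code.  To see
  that every nonempty column set I with card I < l is resolved by a row of H:
  no nonzero codeword lies inside I (as card I < d), so by double duality the
  restrictions of the dual codewords to I form all of Pow I.  In particular some
  sum of rows of hs restricts to a singleton; an inclusion-minimal such set S of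
  rows makes the restriction map injective on subsets of S, which forces
  card S \<le> max 1 (card I - 1) \<le> l - 2, so the sum is a row of H.
\<close>

section \<open>Vectors over GF(2) as finite sets\<close>

definition gf2_subspace :: "nat set set \<Rightarrow> bool" where
  "gf2_subspace V \<longleftrightarrow> {} \<in> V \<and> (\<forall>x\<in>V. \<forall>y\<in>V. vadd x y \<in> V)"

definition orth :: "nat set \<Rightarrow> nat set set \<Rightarrow> nat set set" where
  "orth A V = {x. x \<subseteq> A \<and> (\<forall>c\<in>V. even (card (x \<inter> c)))}"

lemma dual_code_eq_orth: "dual_code n C = orth {0..<n} C"
  by (simp add: dual_code_def orth_def)

lemma card_vadd:
  assumes "finite A" "finite B"
  shows "card (vadd A B) + 2 * card (A \<inter> B) = card A + card B"
proof -
  have "vadd A B = (A \<union> B) - (A \<inter> B)" by (auto simp: vadd_def)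
  then have "card (vadd A B) = card (A \<union> B) - card (A \<inter> B)"
    using assms card_Diff_subset[of "A \<inter> B" "A \<union> B"] by auto
  moreover have "card (A \<inter> B) \<le> card (A \<union> B)"
    using assms by (intro card_mono) auto
  ultimately show ?thesis using card_Un_Int[OF assms] by linarith
qed

lemma even_card_vadd:
  assumes "finite A" "finite B"
  shows "even (card (vadd A B)) \<longleftrightarrow> (even (card A) \<longleftrightarrow> even (card B))"
  using card_vadd[OF assms] by presburger

lemma sign_vadd:
  assumes "finite A" "finite B"
  shows "(-1::int) ^ card (vadd A B) = (-1) ^ card A * (-1) ^ card B"
  using even_card_vadd[OF assms]
  by (cases "even (card A)"; cases "even (card B)") auto

lemma Int_vadd: "x \<inter> vadd a b = vadd (x \<inter> a) (x \<inter> b)"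
  by (auto simp: vadd_def)

lemma vadd_Int: "vadd a b \<inter> x = vadd (a \<inter> x) (b \<inter> x)"
  by (auto simp: vadd_def)

lemma vadd_vadd_cancel [simp]: "vadd v (vadd v x) = x"
  by (auto simp: vadd_def)

lemma sum_involution_zero:
  fixes f :: "'a \<Rightarrow> int"
  assumes "\<And>a. a \<in> A \<Longrightarrow> g a \<in> A" "\<And>a. a \<in> A \<Longrightarrow> g (g a) = a"
    and "\<And>a. a \<in> A \<Longrightarrow> f (g a) = - f a"
  shows "sum f A = 0"
proof -
  have "sum f A = sum (\<lambda>a. - f a) A"
    by (rule sum.reindex_bij_witness[where i=g and j=g]) (use assms in auto)
  then show ?thesis by (simp add: sum_negf)
qed

section \<open>Orthogonal complements\<close>

lemma orth_subspace:
  assumes "finite A"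
  shows "gf2_subspace (orth A V)"
proof -
  have "vadd x y \<in> orth A V" if "x \<in> orth A V" "y \<in> orth A V" for x y
  proof -
    have "finite (x \<inter> c)" "finite (y \<inter> c)" for c
      using that assms by (auto simp: orth_def intro: finite_subset)
    moreover have "vadd x y \<subseteq> A" using that by (auto simp: orth_def vadd_def)
    ultimately show ?thesis
      using that by (auto simp: orth_def vadd_Int even_card_vadd)
  qed
  then show ?thesis by (auto simp: gf2_subspace_def orth_def)
qed

text \<open>Counting the character sum of (-1)^card (x \<inter> c) over x \<subseteq> A and c \<in> V in
  both orders: for fixed x it is card V or 0 according as x \<in> orth A V; for fixed c
  it is 2^card A or 0 according as c = {}.\<close>
lemma card_orth:
  assumes A: "finite A" and VA: "V \<subseteq> Pow A" and V: "gf2_subspace V"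
  shows "card (orth A V) * card V = 2 ^ card A"
proof -
  define s where "s x c = (-1::int) ^ card (x \<inter> c)" for x c :: "nat set"
  have finV: "finite V" using VA A by (meson finite_Pow_iff finite_subset)
  have fin: "finite x" if "x \<subseteq> A" for x using that A finite_subset by blast
  have row_sum: "(\<Sum>c\<in>V. s x c) = (if x \<in> orth A V then int (card V) else 0)"
    if xA: "x \<subseteq> A" for x
  proof (cases "x \<in> orth A V")
    case False
    then obtain c0 where c0: "c0 \<in> V" "odd (card (x \<inter> c0))" using xA by (auto simp: orth_def)
    have "sum (s x) V = 0"
    proof (rule sum_involution_zero[where g="vadd c0"])
      fix c assume c: "c \<in> V"
      show "vadd c0 c \<in> V" using V c c0 by (simp add: gf2_subspace_def)
      show "vadd c0 (vadd c0 c) = c" by simp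
      have "finite c" "finite c0" using VA c c0 fin by auto
      then show "s x (vadd c0 c) = - s x c"
        unfolding s_def Int_vadd using c0 by (simp add: sign_vadd)
    qed
    then show ?thesis using False by simp
  qed (auto simp: orth_def s_def)
  have column_sum: "(\<Sum>x\<in>Pow A. s x c) = (if c = {} then 2 ^ card A else 0)"
    if cV: "c \<in> V" for c
  proof (cases "c = {}")
    case False
    then obtain j where j: "j \<in> c" by auto
    with cV VA have "j \<in> A" by auto
    then have "sum (\<lambda>x. s x c) (Pow A) = 0"
    proof (intro sum_involution_zero[where g="\<lambda>x. vadd x {j}"])
      fix x assume "x \<in> Pow A"
      then have "finite (x \<inter> c)" using fin by auto
      moreover have "vadd x {j} \<inter> c = vadd (x \<inter> c) {j}" using j by (auto simp: vadd_def)
      ultimately show "s (vadd x {j}) c = - s x c" unfolding s_def by (simp add: sign_vadd)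
    qed (auto simp: vadd_def)
    then show ?thesis using False by simp
  qed (simp add: s_def card_Pow A)
  have "int (card (orth A V)) * int (card V) = (\<Sum>x\<in>Pow A. \<Sum>c\<in>V. s x c)"
  proof -
    have "Pow A \<inter> {x. x \<in> orth A V} = orth A V" by (auto simp: orth_def)
    then show ?thesis using row_sum A by (simp add: sum.If_cases)
  qed
  also have "\<dots> = (\<Sum>c\<in>V. \<Sum>x\<in>Pow A. s x c)" by (rule sum.swap)
  also have "\<dots> = 2 ^ card A"
    using column_sum finV V by (simp add: sum.If_cases gf2_subspace_def)
  finally have "int (card (orth A V) * card V) = int (2 ^ card A)" by simp
  then show ?thesis by (simp only: of_nat_eq_iff)
qed

lemma orth_subset_Pow: "orth A V \<subseteq> Pow A"
  by (auto simp: orth_def)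

lemma finite_orth: "finite A \<Longrightarrow> finite (orth A V)"
  using orth_subset_Pow by (rule finite_subset) simp

text \<open>Double duality: V is contained in its double complement, which has the same size.\<close>
lemma orth_orth:
  assumes A: "finite A" and VA: "V \<subseteq> Pow A" and V: "gf2_subspace V"
  shows "orth A (orth A V) = V"
proof -
  let ?W = "orth A V"
  have W: "gf2_subspace ?W" using orth_subspace[OF A] .
  have "card ?W * card (orth A ?W) = card ?W * card V"
    using card_orth[OF A VA V] card_orth[OF A orth_subset_Pow W] by (simp only: mult.commute)
  moreover have "card ?W \<noteq> 0"
    using W finite_orth[OF A] by (auto simp: gf2_subspace_def)
  ultimately have "card (orth A ?W) = card V" by simp
  moreover have "V \<subseteq> orth A ?W" using VA by (auto simp: orth_def Int_commute)
  ultimately have "V = orth A ?W" by (intro card_subset_eq[OF finite_orth[OF A]]) simp_all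
  then show ?thesis by simp
qed

lemma orth_restrict_onto:
  assumes A: "finite A" and VA: "V \<subseteq> Pow A" and V: "gf2_subspace V"
    and IA: "I \<subseteq> A" and none_inside: "V \<inter> Pow I = {{}}"
  shows "(\<lambda>x. x \<inter> I) ` orth A V = Pow I"
proof -
  let ?W = "orth A V" and ?R = "(\<lambda>x. x \<inter> I) ` orth A V"
  have I: "finite I" using IA A finite_subset by blast
  have RI: "?R \<subseteq> Pow I" by auto
  have R: "gf2_subspace ?R"
    using orth_subspace[OF A, of V]
    by (auto simp: gf2_subspace_def vadd_Int[symmetric] image_iff)
  have "orth I ?R \<subseteq> V \<inter> Pow I"
  proof
    fix a assume a: "a \<in> orth I ?R"
    then have aI: "a \<subseteq> I" by (simp add: orth_def)
    have "even (card (a \<inter> w))" if "w \<in> ?W" for w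
    proof -
      have "a \<inter> w = a \<inter> (w \<inter> I)" using aI by auto
      then show ?thesis using a that by (auto simp: orth_def)
    qed
    then have "a \<in> orth A ?W" using aI IA by (auto simp: orth_def)
    then show "a \<in> V \<inter> Pow I" using orth_orth[OF A VA V] aI by auto
  qed
  then have "orth I ?R = {{}}" using none_inside by (auto simp: orth_def)
  then have "card ?R = 2 ^ card I" using card_orth[OF I RI R] by simp
  then show ?thesis using RI I by (simp add: card_subset_eq card_Pow)
qed

section \<open>Row combinations and row spaces\<close>

lemma row_comb_vadd:
  assumes "finite S" "finite T"
  shows "row_comb H (vadd S T) = vadd (row_comb H S) (row_comb H T)"
proof (rule set_eqI)
  fix j
  have split: "{i \<in> vadd S T. j \<in> H ! i} = vadd {i\<in>S. j \<in> H ! i} {i\<in>T. j \<in> H ! i}"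
    by (auto simp: vadd_def)
  have "finite {i\<in>S. j \<in> H ! i}" "finite {i\<in>T. j \<in> H ! i}" using assms by auto
  from even_card_vadd[OF this]
  have "odd (card {i \<in> vadd S T. j \<in> H ! i}) \<longleftrightarrow>
      (odd (card {i\<in>S. j \<in> H ! i}) \<longleftrightarrow> \<not> odd (card {i\<in>T. j \<in> H ! i}))"
    by (simp only: split) blast
  then show "j \<in> row_comb H (vadd S T) \<longleftrightarrow> j \<in> vadd (row_comb H S) (row_comb H T)"
    unfolding row_comb_def vadd_def by blast
qed

lemma row_comb_empty [simp]: "row_comb H {} = {}"
  by (simp add: row_comb_def)

lemma row_comb_single [simp]: "row_comb H {i} = H ! i"
proof -
  have "card {i'\<in>{i}. j \<in> H ! i'} = (if j \<in> H ! i then 1 else 0)" for j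
    by (simp add: Collect_conv_if)
  then show ?thesis by (auto simp: row_comb_def)
qed

lemma row_comb_insert:
  assumes "finite S" "i \<notin> S"
  shows "row_comb H (insert i S) = vadd (H ! i) (row_comb H S)"
proof -
  have "insert i S = vadd {i} S" using assms by (auto simp: vadd_def)
  then show ?thesis using row_comb_vadd[of "{i}" S H] assms by simp
qed

lemma row_comb_cong:
  assumes "\<And>i. i \<in> S \<Longrightarrow> H ! i = H' ! i"
  shows "row_comb H S = row_comb H' S"
proof -
  have "{i\<in>S. j \<in> H ! i} = {i\<in>S. j \<in> H' ! i}" for j using assms by auto
  then show ?thesis by (simp add: row_comb_def)
qed

lemma row_space_eq: "row_space H = row_comb H ` Pow {0..<length H}"
  by (auto simp: row_space_def)

lemma row_space_subspace: "gf2_subspace (row_space H)"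
proof -
  have "vadd (row_comb H S) (row_comb H T) \<in> row_space H"
    if "S \<subseteq> {0..<length H}" "T \<subseteq> {0..<length H}" for S T
  proof -
    have "finite S" "finite T" using that finite_subset by auto
    then have "vadd (row_comb H S) (row_comb H T) = row_comb H (vadd S T)"
      by (simp add: row_comb_vadd)
    moreover have "vadd S T \<subseteq> {0..<length H}" using that by (auto simp: vadd_def)
    ultimately show ?thesis by (auto simp: row_space_eq)
  qed
  moreover have "{} \<in> row_space H"
    unfolding row_space_eq by (rule image_eqI[where x="{}"]) auto
  ultimately show ?thesis by (auto simp: gf2_subspace_def row_space_eq)
qed

lemma row_in_row_space: "x \<in> set H \<Longrightarrow> x \<in> row_space H"
  by (auto simp: in_set_conv_nth row_space_eq intro!: image_eqI[where x="{_}"])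

lemma row_space_least:
  assumes V: "gf2_subspace V" and HV: "set H \<subseteq> V"
  shows "row_space H \<subseteq> V"
proof -
  have "row_comb H S \<in> V" if "finite S" "S \<subseteq> {0..<length H}" for S
    using that
  proof (induction S rule: finite_induct)
    case (insert i S)
    then have "H ! i \<in> V" using HV nth_mem[of i H] by auto
    with insert V show ?case by (simp add: row_comb_insert gf2_subspace_def)
  qed (use V in \<open>simp add: gf2_subspace_def\<close>)
  then show ?thesis using finite_subset[of _ "{0..<length H}"] by (auto simp: row_space_eq)
qed

lemma row_space_snoc:
  "row_space (hs @ [v]) = row_space hs \<union> vadd v ` row_space hs"
proof -
  let ?m = "length hs"
  have old: "row_comb (hs @ [v]) S = row_comb hs S" if "S \<subseteq> {0..<?m}" for S
    using that by (intro row_comb_cong) (auto simp: nth_append)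
  have new: "row_comb (hs @ [v]) (insert ?m S) = vadd v (row_comb hs S)"
    if "S \<subseteq> {0..<?m}" for S
  proof -
    have "finite S" "?m \<notin> S" using that finite_subset by auto
    then show ?thesis using that old row_comb_insert[of S ?m "hs @ [v]"] by simp
  qed
  have old_part: "row_comb (hs @ [v]) ` Pow {0..<?m} = row_space hs"
    unfolding row_space_eq by (rule image_cong) (simp_all add: old)
  have new_part: "row_comb (hs @ [v]) ` insert ?m ` Pow {0..<?m} = vadd v ` row_space hs"
    unfolding row_space_eq image_image by (rule image_cong) (simp_all add: new)
  have "Pow {0..<length (hs @ [v])} = Pow {0..<?m} \<union> insert ?m ` Pow {0..<?m}"
    by (simp add: atLeast0_lessThan_Suc Pow_insert)
  then have "row_space (hs @ [v]) = row_comb (hs @ [v]) ` (Pow {0..<?m} \<union> insert ?m ` Pow {0..<?m})"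
    by (simp only: row_space_eq)
  then show ?thesis by (simp only: image_Un old_part new_part)
qed

lemma card_row_space_snoc:
  assumes "v \<notin> row_space hs"
  shows "card (row_space (hs @ [v])) = 2 * card (row_space hs)"
proof -
  let ?R = "row_space hs"
  have "?R \<inter> vadd v ` ?R = {}"
  proof (rule ccontr)
    assume "?R \<inter> vadd v ` ?R \<noteq> {}"
    then obtain x y where "x \<in> ?R" "y \<in> ?R" "y = vadd v x" by auto
    then have "v = vadd y x" "vadd y x \<in> ?R"
      using row_space_subspace[of hs] by (auto simp: vadd_def gf2_subspace_def)
    then show False using assms by simp
  qed
  moreover have "inj_on (vadd v) ?R" by (rule inj_onI) (metis vadd_vadd_cancel)
  moreover have "finite ?R" by (simp add: row_space_eq)
  ultimately show ?thesis by (simp add: row_space_snoc card_Un_disjoint card_image)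
qed

text \<open>Every finite subspace V is spanned by an independent list hs of vectors, i.e.
  one whose row space has 2^(length hs) elements: an independent list inside V is
  extended one vector at a time until it spans V.\<close>
lemma basis_extension:
  assumes fin: "finite V" and V: "gf2_subspace V"
  shows "set hs \<subseteq> V \<Longrightarrow> card (row_space hs) = 2 ^ length hs \<Longrightarrow>
    \<exists>hs'. row_space hs' = V \<and> card V = 2 ^ length hs'"
proof (induction "card V - card (row_space hs)" arbitrary: hs rule: less_induct)
  case (less hs)
  have sub: "row_space hs \<subseteq> V" using row_space_least[OF V less.prems(1)] .
  show ?case
  proof (cases "row_space hs = V")
    case True then show ?thesis using less.prems by metis
  next
    case False
    then obtain v where v: "v \<in> V" "v \<notin> row_space hs" using sub by auto
    have set': "set (hs @ [v]) \<subseteq> V" using less.prems(1) v by auto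
    have card': "card (row_space (hs @ [v])) = 2 ^ length (hs @ [v])"
      using card_row_space_snoc[OF v(2)] less.prems(2) by simp
    have "card (row_space (hs @ [v])) \<le> card V"
      using card_mono[OF fin row_space_least[OF V set']] .
    moreover have "card (row_space hs) < card (row_space (hs @ [v]))"
      using card_row_space_snoc[OF v(2)] less.prems(2) by simp
    ultimately have "card V - card (row_space (hs @ [v])) < card V - card (row_space hs)"
      by linarith
    from less.hyps[OF this set' card'] show ?thesis .
  qed
qed

lemma basis_exists:
  assumes "finite V" "gf2_subspace V"
  shows "\<exists>hs. row_space hs = V \<and> card V = 2 ^ length hs"
proof -
  have "row_space [] = {{}}" by (auto simp: row_space_eq)
  then show ?thesis using basis_extension[OF assms, of "[]"] by simp
qed

section \<open>Short combinations that resolve a small column set\<close>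

text \<open>Let S0 be an inclusion-minimal set of rows whose sum resolves I.  Then
  distinct subsets of S0 have distinct sums restricted to I: otherwise their
  symmetric difference T is nonempty with zero restriction, and S0 - T would be
  a smaller resolving set.\<close>
lemma minimal_resolving_inj:
  assumes fin: "finite S0" and res: "resolves (row_comb H S0) I"
    and minimal: "\<And>T. T \<subset> S0 \<Longrightarrow> \<not> resolves (row_comb H T) I"
  shows "inj_on (\<lambda>T. row_comb H T \<inter> I) (Pow S0)"
proof (rule inj_onI, rule ccontr)
  fix T1 T2 assume T12: "T1 \<in> Pow S0" "T2 \<in> Pow S0"
    and same: "row_comb H T1 \<inter> I = row_comb H T2 \<inter> I" and "T1 \<noteq> T2"
  have fin12: "finite T1" "finite T2" using T12 fin by (auto intro: finite_subset)
  define T where "T = vadd T1 T2"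
  have "T \<noteq> {}" "T \<subseteq> S0" using \<open>T1 \<noteq> T2\<close> T12 by (auto simp: T_def vadd_def)
  have "row_comb H T \<inter> I = vadd (row_comb H T1 \<inter> I) (row_comb H T2 \<inter> I)"
    by (simp add: T_def row_comb_vadd[OF fin12] vadd_Int)
  then have zero: "row_comb H T \<inter> I = {}" using same by (simp add: vadd_def)
  have "finite T" using \<open>T \<subseteq> S0\<close> fin finite_subset by blast
  then have "row_comb H (vadd S0 T) \<inter> I = vadd (row_comb H S0 \<inter> I) (row_comb H T \<inter> I)"
    using fin by (simp add: row_comb_vadd vadd_Int)
  then have "row_comb H (vadd S0 T) \<inter> I = row_comb H S0 \<inter> I"
    using zero by (simp add: vadd_def)
  moreover have "vadd S0 T \<subset> S0" using \<open>T \<noteq> {}\<close> \<open>T \<subseteq> S0\<close> by (auto simp: vadd_def)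
  ultimately show False using minimal[of "vadd S0 T"] res by (simp add: resolves_def)
qed

text \<open>Counting subsets through this injection bounds the size of S0 by the size
  of I, and strictly when I has at least two elements, since then some proper
  subset of S0 would already resolve I.\<close>
lemma minimal_resolving_card:
  assumes fin: "finite S0" and I: "finite I" and res: "resolves (row_comb H S0) I"
    and minimal: "\<And>T. T \<subset> S0 \<Longrightarrow> \<not> resolves (row_comb H T) I"
  shows "card S0 \<le> max 1 (card I - 1)"
proof -
  let ?f = "\<lambda>T. row_comb H T \<inter> I"
  have img: "card (?f ` Pow S0) = 2 ^ card S0" "?f ` Pow S0 \<subseteq> Pow I"
    using card_image[OF minimal_resolving_inj[OF assms(1,3,4)]] fin by (auto simp: card_Pow)
  have "card (?f ` Pow S0) \<le> card (Pow I)" using img(2) I by (intro card_mono) auto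
  then have "(2::nat) ^ card S0 \<le> 2 ^ card I" using img(1) I by (simp add: card_Pow)
  then have le: "card S0 \<le> card I" by simp
  have "card S0 \<noteq> card I" if two: "2 \<le> card I"
  proof
    assume "card S0 = card I"
    then have onto: "?f ` Pow S0 = Pow I" using img I by (simp add: card_subset_eq card_Pow)
    obtain j0 where j0: "?f S0 = {j0}" using res by (auto simp: resolves_def card_1_singleton_iff)
    have "card (I - {j0}) > 0" using two I by (simp add: card_Diff_singleton_if)
    then obtain j where j: "j \<in> I" "j \<noteq> j0" by (auto simp: card_gt_0_iff)
    then have "{j} \<in> ?f ` Pow S0" using onto by simp
    then obtain T where "T \<subseteq> S0" "?f T = {j}" by auto
    moreover from this have "T \<noteq> S0" using j0 j by auto
    ultimately show False using minimal[of T] by (auto simp: resolves_def)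
  qed
  then show ?thesis using le by linarith
qed

lemma short_resolving_combination:
  assumes I: "finite I" "I \<noteq> {}" and onto: "Pow I \<subseteq> (\<lambda>x. x \<inter> I) ` row_space H"
  shows "\<exists>S. S \<subseteq> {0..<length H} \<and> S \<noteq> {} \<and> card S \<le> max 1 (card I - 1) \<and>
             resolves (row_comb H S) I"
proof -
  define P where "P S \<longleftrightarrow> S \<subseteq> {0..<length H} \<and> resolves (row_comb H S) I" for S
  obtain j where "j \<in> I" using I by blast
  then have "{j} \<in> (\<lambda>x. x \<inter> I) ` row_space H" by (intro subsetD[OF onto]) simp
  then obtain S1 where "S1 \<subseteq> {0..<length H}" "row_comb H S1 \<inter> I = {j}"
    by (auto simp: row_space_eq)
  then have "P S1" by (simp add: P_def resolves_def)
  then obtain S0 where S0: "P S0" and least: "\<And>T. P T \<Longrightarrow> card S0 \<le> card T"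
    using ex_has_least_nat[of P S1 card] by blast
  have S0H: "S0 \<subseteq> {0..<length H}" and res: "resolves (row_comb H S0) I"
    using S0 by (simp_all add: P_def)
  have fin: "finite S0" using S0H finite_subset by blast
  have minimal: "\<not> resolves (row_comb H T) I" if "T \<subset> S0" for T
  proof
    assume "resolves (row_comb H T) I"
    with that S0H have "P T" by (auto simp: P_def)
    then show False using least[of T] psubset_card_mono[OF fin that] by simp
  qed
  have "S0 \<noteq> {}" using res by (auto simp: resolves_def)
  with S0H res minimal_resolving_card[OF fin I(1) res minimal] show ?thesis by blast
qed

section \<open>Parity-check matrices and stopping distance\<close>

lemma row_space_map_row_comb:
  assumes "\<And>S. S \<in> set xs \<Longrightarrow> S \<subseteq> {0..<length H}"
    and "\<And>i. i < length H \<Longrightarrow> {i} \<in> set xs"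
  shows "row_space (map (row_comb H) xs) = row_space H"
proof
  show "row_space (map (row_comb H) xs) \<subseteq> row_space H"
    using assms(1) by (intro row_space_least row_space_subspace) (auto simp: row_space_eq)
  have "set H \<subseteq> row_space (map (row_comb H) xs)"
  proof
    fix v assume "v \<in> set H"
    then obtain i where "i < length H" "v = row_comb H {i}" by (auto simp: in_set_conv_nth)
    then show "v \<in> row_space (map (row_comb H) xs)"
      using assms(2) by (intro row_in_row_space) (force intro: rev_image_eqI[of "{i}"])
  qed
  then show "row_space H \<subseteq> row_space (map (row_comb H) xs)"
    by (intro row_space_least row_space_subspace)
qed

lemma card_bounded_subsets:
  "card {S. S \<subseteq> {0..<r} \<and> 1 \<le> card S \<and> card S \<le> m} = (\<Sum>i=1..m. r choose i)"
proof -
  have "{S. S \<subseteq> {0..<r} \<and> 1 \<le> card S \<and> card S \<le> m} =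
      (\<Union>i\<in>{1..m}. {S. S \<subseteq> {0..<r} \<and> card S = i})"
    by auto
  moreover have "card (\<Union>i\<in>{1..m}. {S. S \<subseteq> {0..<r} \<and> card S = i}) =
      (\<Sum>i=1..m. card {S. S \<subseteq> {0..<r} \<and> card S = i})"
    by (rule card_UN_disjoint) auto
  ultimately show ?thesis using n_subsets[of "{0..<r}"] by simp
qed

lemma combination_matrix_exists:
  assumes "1 \<le> m"
  shows "\<exists>H. length H = (\<Sum>i=1..m. length hs choose i) \<and> row_space H = row_space hs \<and>
    (\<forall>S. S \<subseteq> {0..<length hs} \<and> S \<noteq> {} \<and> card S \<le> m \<longrightarrow> row_comb hs S \<in> set H)"
proof -
  define T where "T = {S. S \<subseteq> {0..<length hs} \<and> 1 \<le> card S \<and> card S \<le> m}"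
  obtain xs where xs: "distinct xs" "set xs = T"
    using finite_distinct_list[of T] by (auto simp: T_def intro: finite_subset[of _ "Pow _"])
  have "length (map (row_comb hs) xs) = (\<Sum>i=1..m. length hs choose i)"
    using distinct_card[OF xs(1)] xs(2) card_bounded_subsets by (simp add: T_def)
  moreover have "row_space (map (row_comb hs) xs) = row_space hs"
    using assms by (intro row_space_map_row_comb) (auto simp: xs T_def)
  moreover have "row_comb hs S \<in> set (map (row_comb hs) xs)"
    if "S \<subseteq> {0..<length hs}" "S \<noteq> {}" "card S \<le> m" for S
    using that xs(2) by (auto simp: T_def Suc_le_eq card_gt_0_iff intro: finite_subset)
  ultimately show ?thesis by blast
qed

lemma parity_check_matrixI:
  assumes "row_space H = dual_code n C"
  shows "is_parity_check_matrix n C H"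
  using assms row_in_row_space
  by (fastforce simp: is_parity_check_matrix_def is_binary_matrix_def dual_code_def)

lemma stopping_distance_geI:
  assumes "\<And>I. I \<subseteq> {0..<n} \<Longrightarrow> I \<noteq> {} \<Longrightarrow> card I < l \<Longrightarrow> \<exists>r\<in>set H. resolves r I"
  shows "enat l \<le> stopping_distance n H"
  unfolding stopping_distance_def
proof (rule INF_greatest)
  fix I assume "I \<in> {I. stopping_set n H I}"
  then show "enat l \<le> enat (card I)"
    using assms[of I] by (auto simp: stopping_set_def not_le[symmetric])
qed

lemma rho_le_length:
  assumes "is_parity_check_matrix n C H" "enat l \<le> stopping_distance n H"
  shows "rho n l C \<le> enat (length H)"
  unfolding rho_def using assms by (intro INF_lower) simp

section \<open>The dual of an [n,k,d] code\<close>

lemma nkd_code_subspace: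
  assumes "is_nkd_code n k d C"
  shows "C \<subseteq> Pow {0..<n}" "gf2_subspace C"
  using assms by (auto simp: is_nkd_code_def binary_linear_code_def gf2_subspace_def)

lemma dual_code_subspace: "finite (dual_code n C)" "gf2_subspace (dual_code n C)"
  by (simp_all add: dual_code_eq_orth finite_orth orth_subspace)

lemma card_dual_code:
  assumes "is_nkd_code n k d C"
  shows "card (dual_code n C) = 2 ^ (n - k)"
proof -
  let ?D = "dual_code n C"
  have prod: "card ?D * 2 ^ k = 2 ^ n"
    using card_orth[OF _ nkd_code_subspace[OF assms]] assms
    by (simp add: dual_code_eq_orth is_nkd_code_def)
  then have "card ?D \<ge> 1" by (cases "card ?D") auto
  then have "(2::nat) ^ k \<le> 2 ^ n" using prod by (metis mult_le_mono1 mult_1)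
  then have "card ?D * 2 ^ k = 2 ^ (n - k) * 2 ^ k" using prod by (simp add: power_add[symmetric])
  then show ?thesis by simp
qed

text \<open>Fewer than d coordinates support no nonzero codeword, so every pattern on
  them is the restriction of a dual codeword.\<close>
lemma dual_code_restrict_onto:
  assumes C: "is_nkd_code n k d C" and "I \<subseteq> {0..<n}" "card I < d"
  shows "(\<lambda>x. x \<inter> I) ` dual_code n C = Pow I"
proof -
  have "c = {}" if "c \<in> C" "c \<subseteq> I" for c
  proof (rule ccontr)
    assume "c \<noteq> {}"
    then have "d \<le> card c" using C that(1) by (simp add: is_nkd_code_def)
    moreover have "card c \<le> card I" using that(2) assms(2) by (intro card_mono) (auto intro: finite_subset)
    ultimately show False using assms(3) by simp
  qed
  moreover have "{} \<in> C" using nkd_code_subspace[OF C] by (simp add: gf2_subspace_def)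
  ultimately have "C \<inter> Pow I = {{}}" by auto
  then show ?thesis
    using orth_restrict_onto[OF _ nkd_code_subspace[OF C] assms(2)] by (simp add: dual_code_eq_orth)
qed

lemma dual_code_short_resolving:
  assumes C: "is_nkd_code n k d C" and hs: "row_space hs = dual_code n C"
    and l: "3 \<le> l" "l \<le> d"
    and I: "I \<subseteq> {0..<n}" "I \<noteq> {}" "card I < l"
  shows "\<exists>S. S \<subseteq> {0..<length hs} \<and> S \<noteq> {} \<and> card S \<le> l - 2 \<and> resolves (row_comb hs S) I"
proof -
  have onto: "Pow I \<subseteq> (\<lambda>x. x \<inter> I) ` row_space hs"
    using dual_code_restrict_onto[OF C I(1)] I(3) l(2) hs by simp
  have "finite I" using I(1) finite_subset by blast
  from short_resolving_combination[OF this I(2) onto] obtain S where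
    S: "S \<subseteq> {0..<length hs}" "S \<noteq> {}" "card S \<le> max 1 (card I - 1)"
      "resolves (row_comb hs S) I"
    by blast
  moreover have "card S \<le> l - 2" using S(3) I(3) l(1) by linarith
  ultimately show ?thesis by blast
qed

theorem theorem7:
  fixes n k d l :: nat and C :: "nat set set"
  assumes "is_nkd_code n k d C"
    and "d > 3"
    and "3 \<le> l" and "l \<le> d"
  shows "rho n l C \<le> enat (\<Sum>i=1..l-2. (n - k) choose i)"
proof -
  obtain hs where hs: "row_space hs = dual_code n C" "card (dual_code n C) = 2 ^ length hs"
    using basis_exists[OF dual_code_subspace] by blast
  have rank: "length hs = n - k" using hs(2) card_dual_code[OF assms(1)] by simp
  have "1 \<le> l - 2" using assms(3) by simp
  from combination_matrix_exists[OF this, of hs] obtain H where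
    H: "length H = (\<Sum>i=1..l-2. length hs choose i)" "row_space H = row_space hs"
      "\<forall>S. S \<subseteq> {0..<length hs} \<and> S \<noteq> {} \<and> card S \<le> l - 2 \<longrightarrow> row_comb hs S \<in> set H"
    by blast
  have "is_parity_check_matrix n C H" using parity_check_matrixI H(2) hs(1) by simp
  moreover have "enat l \<le> stopping_distance n H"
  proof (rule stopping_distance_geI)
    fix I assume "I \<subseteq> {0..<n}" "I \<noteq> {}" "card I < l"
    from dual_code_short_resolving[OF assms(1) hs(1) assms(3,4) this] H(3)
    show "\<exists>r\<in>set H. resolves r I" by blast
  qed
  ultimately show ?thesis using rho_le_length H(1) rank by metis
qed

end
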